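(* Let $\langle \mathbb{P}_\beta : \beta \le \alpha \rangle$ be a suitable mixed support forcing iteration with $\alpha<\omega_3$, based on $\langle \dot S_\gamma : \gamma\in\alpha\cap\mathrm{odd}\rangle$. Let $\beta\le\alpha$ and $p,q\in\mathbb{P}_\beta$ with $q\le^{*,s}_\beta p$. Then: (1) $p\upharpoonright\mathrm{even}=q\upharpoonright\mathrm{even}$; (2) $\mathrm{dom}(p)\subseteq\mathrm{dom}(q)$; (3) for every odd $\gamma\in\mathrm{dom}(p)$, $p\upharpoonright(\gamma\cap\mathrm{even})$ forces in $\mathbb{P}^c_\gamma$ that one of $p(\gamma)$ and $q(\gamma)$ is an end-extension of the other.
   Context: "even"/"odd" are the classes of even/odd ordinals; $\mathrm{Add}(\omega)$ is Cohen forcing; $\omega_2$ means $\omega_2$ of the ground model. Let $\alpha \le \omega_3$. A sequence of forcing posets $\langle \mathbb{P}_\beta : \beta \le \alpha\rangle$ with a sequence $\langle \dot S_\gamma : \gamma \in \alpha\cap\mathrm{odd}\rangle$ of nice $\mathbb{P}_\gamma$-names for subsets of $\omega_2 \cap \mathrm{cof}(\omega)$ is a suitable mixed support forcing iteration of length $\alpha$ based on these names if every member of each $\mathbb{P}_\beta$ is a function with domain $\subseteq\beta$ and, with $\mathbb{P}_\beta^c := \{p \in \mathbb{P}_\beta : \mathrm{dom}(p) \subseteq \mathrm{even}\}$: (1) $\mathbb{P}_0 = \{\emptyset\}$; (2) for even $\gamma<\alpha$, $p \in \mathbb{P}_{\gamma+1}$ iff $p$ is a function, $\mathrm{dom}(p)\subseteq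 \gamma+1$, $p\upharpoonright\gamma \in \mathbb{P}_\gamma$, and if $\gamma \in \mathrm{dom}(p)$ then $p(\gamma)\in \mathrm{Add}(\omega)$; (3) for odd $\gamma<\alpha$, $p\in\mathbb{P}_{\gamma+1}$ iff $p$ is a function, $\mathrm{dom}(p)\subseteq\gamma+1$, $p\upharpoonright\gamma\in\mathbb{P}_\gamma$, and if $\gamma\in\mathrm{dom}(p)$ then $p(\gamma)$ is a nice $\mathbb{P}^c_\gamma$-name for a nonempty closed bounded subset of $\omega_2$ with $p\upharpoonright\gamma \Vdash_{\mathbb{P}_\gamma} p(\gamma)\cap \dot S_\gamma = \emptyset$; (4) for limit $\delta \le\alpha$, $p\in\mathbb{P}_\delta$ iff $p$ is a function, $\mathrm{dom}(p)\subseteq\delta$, $|\mathrm{dom}(p)\cap\mathrm{even}|<\omega$, $|\mathrm{dom}(p)\cap\mathrm{odd}|<\omega_2$, and $p\upharpoonright\beta\in\mathbb{P}_\beta$ for all $\beta<\delta$; (5) $q\le_\beta p$ iff $\mathrm{dom}(p)\subseteq\mathrm{dom}(q)$, $p(\gamma)\subseteq q(\gamma)$ for even $\gamma\in\mathrm{dom}(p)$, and for odd $\gamma\in\mathrm{dom}(p)$, $q\upharpoonright(\gamma\cap\mathrm{even})\Vdash_{\mathbb{P}^c_\gamma}$ "$q(\gamma)$ end-extends $p(\gamma)$". $q\le^*_\beta p$ iff $q\le_\beta p$ and $q\upharpoonright\mathrm{even}=p\upharpoonright\mathrm{even}$; $\mathbb{P}^*_\beta := (\mathbb{P}_\beta,\le^*_\beta)$.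 $q\le^{*,s}_\beta p$ iff every $r\le^*_\beta q$ is compatible with $p$ in $\mathbb{P}^*_\beta$. For $\gamma\notin\mathrm{dom}(p)$, $p(\gamma)$ means $\emptyset$. *)

theory Defs
  imports Main
begin

section \<open>Ordinals: a well-ordered type 'o whose elements stand for ordinals\<close>

definition lim0 :: "'o::wellorder \<Rightarrow> bool" where
  "lim0 \<xi> \<longleftrightarrow> \<not> (\<exists>\<eta>. \<eta> < \<xi> \<and> \<not> (\<exists>x. \<eta> < x \<and> x < \<xi>))"

definition is_limit :: "'o::wellorder \<Rightarrow> bool" where
  "is_limit \<xi> \<longleftrightarrow> lim0 \<xi> \<and> (\<exists>\<eta>. \<eta> < \<xi>)"

definition succ_of :: "'o::wellorder \<Rightarrow> 'o \<Rightarrow> bool" where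
  "succ_of \<gamma> \<beta> \<longleftrightarrow> \<gamma> < \<beta> \<and> \<not> (\<exists>x. \<gamma> < x \<and> x < \<beta>)"

definition even_ord :: "'o::wellorder \<Rightarrow> bool" where
  "even_ord \<xi> \<longleftrightarrow> (\<exists>l. l \<le> \<xi> \<and> lim0 l \<and> finite {\<eta>. l \<le> \<eta> \<and> \<eta> < \<xi>}
                        \<and> even (card {\<eta>. l \<le> \<eta> \<and> \<eta> < \<xi>}))"
  \<comment> \<open>\<xi> = \<lambda> + 2n with \<lambda> zero or limit\<close>

definition odd_ord :: "'o::wellorder \<Rightarrow> bool" where
  "odd_ord \<xi> \<longleftrightarrow> \<not> even_ord \<xi>"

definition cof_omega :: "'o::wellorder \<Rightarrow> bool" where
  "cof_omega \<xi> \<longleftrightarrow> (\<exists>f :: nat \<Rightarrow> 'o. strict_mono f \<and> (\<forall>n. f n < \<xi>) \<and> (\<forall>\<eta>. \<eta> < \<xi> \<longrightarrow> (\<exists>n. \<eta> < f n)))"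

definition ord_rel :: "'o::wellorder set \<Rightarrow> 'o rel" where
  "ord_rel A = Restr {(x, y). x \<le> y} A"

text \<open>om is (the ordinal) omega_2, resp. omega_3: the ordinals below it have order type aleph_2, resp. aleph_3.\<close>
definition is_omega2 :: "'o::wellorder \<Rightarrow> bool" where
  "is_omega2 om \<longleftrightarrow> (ord_rel {\<eta>. \<eta> < om}, cardSuc (cardSuc natLeq)) \<in> ordIso"

definition is_omega3 :: "'o::wellorder \<Rightarrow> bool" where
  "is_omega3 om \<longleftrightarrow> (ord_rel {\<eta>. \<eta> < om}, cardSuc (cardSuc (cardSuc natLeq))) \<in> ordIso"

section \<open>Forcing over an abstract poset (X, le), for formulas about nice names for sets of ordinals\<close>

datatype ('o, 'c) fm =
    Ground bool
  | Mem 'o "'o \<Rightarrow> 'c set"    \<comment> \<open>\<xi>\<check> \<in> nice name n, where n \<xi> is the antichain for \<xi>\<close>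
  | Neg "('o, 'c) fm"
  | Conj "('o, 'c) fm" "('o, 'c) fm"
  | All "'o \<Rightarrow> ('o, 'c) fm"     \<comment> \<open>quantifier over (ground) ordinals\<close>

primrec forces :: "'c set \<Rightarrow> ('c \<Rightarrow> 'c \<Rightarrow> bool) \<Rightarrow> ('o, 'c) fm \<Rightarrow> 'c \<Rightarrow> bool" where
  "forces X le (Ground b) p = b"
| "forces X le (Mem \<xi> n) p =
     (\<forall>r\<in>X. le r p \<longrightarrow> (\<exists>s\<in>X. le s r \<and> (\<exists>a\<in>n \<xi>. le s a)))"
| "forces X le (Neg \<phi>) p = (\<forall>r\<in>X. le r p \<longrightarrow> \<not> forces X le \<phi> r)"
| "forces X le (Conj \<phi> \<psi>) p = (forces X le \<phi> p \<and> forces X le \<psi> p)"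
| "forces X le (All f) p = (\<forall>\<xi>. forces X le (f \<xi>) p)"

definition Imp :: "('o, 'c) fm \<Rightarrow> ('o, 'c) fm \<Rightarrow> ('o, 'c) fm" where
  "Imp \<phi> \<psi> = Neg (Conj \<phi> (Neg \<psi>))"

definition Disj :: "('o, 'c) fm \<Rightarrow> ('o, 'c) fm \<Rightarrow> ('o, 'c) fm" where
  "Disj \<phi> \<psi> = Neg (Conj (Neg \<phi>) (Neg \<psi>))"

definition Ex :: "('o \<Rightarrow> ('o, 'c) fm) \<Rightarrow> ('o, 'c) fm" where
  "Ex f = Neg (All (\<lambda>x. Neg (f x)))"

definition endext :: "('o \<Rightarrow> 'c set) \<Rightarrow> ('o \<Rightarrow> 'c set) \<Rightarrow> ('o::wellorder, 'c) fm" where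
  "endext a b =
     Conj (All (\<lambda>\<xi>. Imp (Mem \<xi> a) (Mem \<xi> b)))
          (All (\<lambda>\<xi>. All (\<lambda>\<zeta>. Imp (Conj (Mem \<xi> b) (Conj (Neg (Mem \<xi> a)) (Mem \<zeta> a)))
                                  (Ground (\<zeta> < \<xi>)))))"

text \<open>"a is a nonempty closed bounded subset of om2"\<close>
definition cbs :: "'o \<Rightarrow> ('o \<Rightarrow> 'c set) \<Rightarrow> ('o::wellorder, 'c) fm" where
  "cbs om2 a =
     Conj (All (\<lambda>\<xi>. Imp (Mem \<xi> a) (Ground (\<xi> < om2))))
    (Conj (Ex (\<lambda>\<xi>. Mem \<xi> a))
    (Conj (Ex (\<lambda>\<eta>. Conj (Ground (\<eta> < om2)) (All (\<lambda>\<xi>. Imp (Mem \<xi> a) (Ground (\<xi> < \<eta>))))))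
          (All (\<lambda>\<delta>. Imp (Conj (Ground (is_limit \<delta> \<and> \<delta> < om2))
                               (All (\<lambda>\<zeta>. Imp (Ground (\<zeta> < \<delta>))
                                   (Ex (\<lambda>\<xi>. Conj (Mem \<xi> a) (Ground (\<zeta> \<le> \<xi> \<and> \<xi> < \<delta>)))))))
                         (Mem \<delta> a)))))"

definition disjoint_fm :: "('o \<Rightarrow> 'c set) \<Rightarrow> ('o \<Rightarrow> 'c set) \<Rightarrow> ('o, 'c) fm" where
  "disjoint_fm a b = All (\<lambda>\<xi>. Neg (Conj (Mem \<xi> a) (Mem \<xi> b)))"

definition antichain :: "'c set \<Rightarrow> ('c \<Rightarrow> 'c \<Rightarrow> bool) \<Rightarrow> 'c set \<Rightarrow> bool" where
  "antichain X le A \<longleftrightarrow> A \<subseteq> X \<and>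
     (\<forall>a\<in>A. \<forall>b\<in>A. a \<noteq> b \<longrightarrow> \<not> (\<exists>s\<in>X. le s a \<and> le s b))"

definition nice_name :: "'c set \<Rightarrow> ('c \<Rightarrow> 'c \<Rightarrow> bool) \<Rightarrow> 'o set \<Rightarrow> ('o \<Rightarrow> 'c set) \<Rightarrow> bool" where
  "nice_name X le D n \<longleftrightarrow> (\<forall>\<xi>. antichain X le (n \<xi>) \<and> (n \<xi> \<noteq> {} \<longrightarrow> \<xi> \<in> D))"

text \<open>Conditions of P^c (domain of even ordinals, Cohen values) are represented as 'o cc.
  Cohen conditions: finite partial functions nat \<rightharpoonup> bool.\<close>
type_synonym 'o cc = "'o \<rightharpoonup> (nat \<rightharpoonup> bool)"

datatype 'o val = Cohen "nat \<rightharpoonup> bool" | Club "'o \<Rightarrow> 'o cc set"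

type_synonym 'o cond = "'o \<rightharpoonup> 'o val"

definition emb :: "'o cc \<Rightarrow> 'o cond" where
  "emb c = (\<lambda>\<delta>. map_option Cohen (c \<delta>))"

definition embname :: "('o \<Rightarrow> 'o cc set) \<Rightarrow> ('o \<Rightarrow> 'o cond set)" where
  "embname n = (\<lambda>\<xi>. emb ` n \<xi>)"

text \<open>p(\<gamma>), with p(\<gamma>) = \<emptyset> for \<gamma> \<notin> dom p\<close>
definition coh :: "'o cond \<Rightarrow> 'o \<Rightarrow> (nat \<rightharpoonup> bool)" where
  "coh p \<gamma> = (case p \<gamma> of Some (Cohen c) \<Rightarrow> c | _ \<Rightarrow> Map.empty)"

definition nm :: "'o cond \<Rightarrow> 'o \<Rightarrow> ('o \<Rightarrow> 'o cc set)" where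
  "nm p \<gamma> = (case p \<gamma> of Some (Club n) \<Rightarrow> n | _ \<Rightarrow> (\<lambda>_. {}))"

definition cres :: "'o cond \<Rightarrow> 'o::wellorder \<Rightarrow> 'o cc" where
  "cres p \<gamma> = (\<lambda>\<delta>. if \<delta> < \<gamma> \<and> even_ord \<delta>
                     then (case p \<delta> of Some (Cohen c) \<Rightarrow> Some c | _ \<Rightarrow> None) else None)"

definition evres :: "'o::wellorder cond \<Rightarrow> 'o cond" where
  "evres p = p |` {\<gamma>. even_ord \<gamma>}"

definition Pc :: "('o \<Rightarrow> 'o cond set) \<Rightarrow> 'o::wellorder \<Rightarrow> 'o cc set" where
  "Pc P \<gamma> = {c. emb c \<in> P \<gamma> \<and> dom c \<subseteq> {\<delta>. even_ord \<delta>}}"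

text \<open>order of P^c (clause (5) restricted to conditions with only even coordinates): r \<le> s\<close>
definition lec :: "'o cc \<Rightarrow> 'o cc \<Rightarrow> bool" where
  "lec r s \<longleftrightarrow> dom s \<subseteq> dom r \<and> (\<forall>\<delta>\<in>dom s. the (s \<delta>) \<subseteq>\<^sub>m the (r \<delta>))"

definition leq :: "('o \<Rightarrow> 'o cond set) \<Rightarrow> 'o::wellorder cond \<Rightarrow> 'o cond \<Rightarrow> bool" where
  "leq P q p \<longleftrightarrow> dom p \<subseteq> dom q
     \<and> (\<forall>\<gamma>\<in>dom p. even_ord \<gamma> \<longrightarrow> coh p \<gamma> \<subseteq>\<^sub>m coh q \<gamma>)
     \<and> (\<forall>\<gamma>\<in>dom p. odd_ord \<gamma> \<longrightarrow>
           forces (Pc P \<gamma>) lec (endext (nm p \<gamma>) (nm q \<gamma>)) (cres q \<gamma>))"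

definition leqb :: "('o \<Rightarrow> 'o cond set) \<Rightarrow> 'o::wellorder \<Rightarrow> 'o cond \<Rightarrow> 'o cond \<Rightarrow> bool" where
  "leqb P \<beta> q p \<longleftrightarrow> p \<in> P \<beta> \<and> q \<in> P \<beta> \<and> leq P q p"

definition leqstar :: "('o \<Rightarrow> 'o cond set) \<Rightarrow> 'o::wellorder \<Rightarrow> 'o cond \<Rightarrow> 'o cond \<Rightarrow> bool" where
  "leqstar P \<beta> q p \<longleftrightarrow> leqb P \<beta> q p \<and> evres q = evres p"

definition compat_star :: "('o \<Rightarrow> 'o cond set) \<Rightarrow> 'o::wellorder \<Rightarrow> 'o cond \<Rightarrow> 'o cond \<Rightarrow> bool" where
  "compat_star P \<beta> r p \<longleftrightarrow> (\<exists>s\<in>P \<beta>. leqstar P \<beta> s r \<and> leqstar P \<beta> s p)"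

definition leqstar_s :: "('o \<Rightarrow> 'o cond set) \<Rightarrow> 'o::wellorder \<Rightarrow> 'o cond \<Rightarrow> 'o cond \<Rightarrow> bool" where
  "leqstar_s P \<beta> q p \<longleftrightarrow> p \<in> P \<beta> \<and> q \<in> P \<beta> \<and>
     (\<forall>r. leqstar P \<beta> r q \<longrightarrow> compat_star P \<beta> r p)"

definition suitable :: "'o::wellorder \<Rightarrow> 'o \<Rightarrow> ('o \<Rightarrow> 'o cond set) \<Rightarrow> ('o \<Rightarrow> 'o \<Rightarrow> 'o cond set) \<Rightarrow> bool" where
  "suitable om2 \<alpha> P S \<longleftrightarrow>
     (\<forall>\<gamma>. \<gamma> < \<alpha> \<and> odd_ord \<gamma> \<longrightarrow>
        nice_name (P \<gamma>) (leq P) {\<xi>. \<xi> < om2 \<and> cof_omega \<xi>} (S \<gamma>))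
   \<and> (\<forall>\<beta>. \<beta> \<le> \<alpha> \<longrightarrow> (\<forall>p\<in>P \<beta>. dom p \<subseteq> {\<gamma>. \<gamma> < \<beta>}))
   \<and> (\<forall>z. (\<forall>x. z \<le> x) \<longrightarrow> P z = {Map.empty})
   \<and> (\<forall>\<gamma> \<beta>. \<gamma> < \<alpha> \<and> even_ord \<gamma> \<and> succ_of \<gamma> \<beta> \<longrightarrow>
        (\<forall>p. p \<in> P \<beta> \<longleftrightarrow> dom p \<subseteq> {x. x \<le> \<gamma>} \<and> p |` {x. x < \<gamma>} \<in> P \<gamma>
             \<and> (\<gamma> \<in> dom p \<longrightarrow> (\<exists>c. p \<gamma> = Some (Cohen c) \<and> finite (dom c)))))
   \<and> (\<forall>\<gamma> \<beta>. \<gamma> < \<alpha> \<and> odd_ord \<gamma> \<and> succ_of \<gamma> \<beta> \<longrightarrow>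
        (\<forall>p. p \<in> P \<beta> \<longleftrightarrow> dom p \<subseteq> {x. x \<le> \<gamma>} \<and> p |` {x. x < \<gamma>} \<in> P \<gamma>
             \<and> (\<gamma> \<in> dom p \<longrightarrow> (\<exists>n. p \<gamma> = Some (Club n)
                    \<and> nice_name (Pc P \<gamma>) lec {\<xi>. \<xi> < om2} n
                    \<and> forces (Pc P \<gamma>) lec (cbs om2 n) Map.empty
                    \<and> forces (P \<gamma>) (leq P) (disjoint_fm (embname n) (S \<gamma>)) (p |` {x. x < \<gamma>})))))
   \<and> (\<forall>\<delta>. \<delta> \<le> \<alpha> \<and> is_limit \<delta> \<longrightarrow>
        (\<forall>p. p \<in> P \<delta> \<longleftrightarrow> dom p \<subseteq> {x. x < \<delta>}
             \<and> finite (dom p \<inter> {x. even_ord x})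
             \<and> (card_of (dom p \<inter> {x. odd_ord x}), card_of {\<eta>. \<eta> < om2}) \<in> ordLess
             \<and> (\<forall>\<beta>. \<beta> < \<delta> \<longrightarrow> p |` {x. x < \<beta>} \<in> P \<beta>)))"

end

theory Submission
  imports Defs
begin

text \<open>Since \<open>q \<le>\<^sup>* q\<close>, the hypothesis gives a common \<open>\<le>\<^sup>*\<close>-extension \<open>s\<close> of \<open>q\<close> and \<open>p\<close>; as \<open>\<le>\<^sup>*\<close>
  does not touch even coordinates, \<open>p\<close> and \<open>q\<close> agree there.  If \<open>\<gamma> \<in> dom p - dom q\<close> (so \<open>\<gamma>\<close> is odd),
  extend \<open>q\<close> at \<open>\<gamma>\<close> by the singleton club \<open>{a}\<close>, where \<open>a\<close> has finitely many predecessors, hence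
  cofinality \<open>\<noteq> \<omega>\<close>, so the extension avoids \<open>S\<^sub>\<gamma>\<close>.  A common extension with \<open>p\<close> end-extends both
  \<open>{a}\<close> and the nonempty \<open>p(\<gamma>)\<close>, which forces \<open>a = min p(\<gamma>)\<close>; two choices of \<open>a\<close> contradict each
  other.  Finally, on odd \<open>\<gamma> \<in> dom p\<close> the name \<open>s(\<gamma>)\<close> end-extends both \<open>p(\<gamma>)\<close> and \<open>q(\<gamma>)\<close>, and two
  sets with a common end-extension are comparable under end-extension.\<close>

section \<open>Ordinals\<close>

lemma ordinal_cases:
  fixes \<beta> :: "'o::wellorder"
  obtains (zero) "\<forall>x. \<beta> \<le> x" | (succ) \<delta> where "succ_of \<delta> \<beta>" | (limit) "is_limit \<beta>"
  by (metis is_limit_def lim0_def not_less succ_of_def)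

lemma succ_of_less: "succ_of \<delta> \<beta> \<Longrightarrow> \<delta> < \<beta>"
  by (simp add: succ_of_def)

lemma succ_of_le: "succ_of \<delta> \<beta> \<Longrightarrow> z < \<beta> \<Longrightarrow> z \<le> (\<delta>::'o::wellorder)"
  unfolding succ_of_def using not_less by blast

lemma succ_of_exists:
  fixes \<delta> :: "'o::wellorder"
  assumes "\<delta> < \<beta>"
  obtains \<beta>' where "succ_of \<delta> \<beta>'" "\<beta>' \<le> \<beta>"
  using assms unfolding succ_of_def by (metis LeastI Least_le not_less_Least)

lemma Int_initial_segments [simp]:
  fixes x y :: "'o::order"
  shows "x \<le> y \<Longrightarrow> {z. z < y} \<inter> {z. z < x} = {z. z < x}"
  using less_le_trans by blast

lemma restrict_map_superset_dom: "dom p \<subseteq> A \<Longrightarrow> p |` A = p"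
  by (rule ext) (metis domIff restrict_map_def subsetD)

lemma finite_ordLess_infinite_card_of:
  "finite A \<Longrightarrow> infinite B \<Longrightarrow> (card_of A, card_of B) \<in> ordLess"
  by (rule finite_ordLess_infinite[OF card_of_Well_order card_of_Well_order]) (simp_all add: Field_card_of)

lemma insert_ordLess_infinite_card_of:
  "infinite B \<Longrightarrow> (card_of A, card_of B) \<in> ordLess \<Longrightarrow> (card_of (insert x A), card_of B) \<in> ordLess"
  using card_of_Un_ordLess_infinite[of B "{x}" A] finite_ordLess_infinite_card_of[of "{x}" B] by simp

lemma is_omega2_infinite:
  assumes "is_omega2 (om2::'o::wellorder)"
  shows "infinite {\<eta>. \<eta> < om2}"
proof
  assume fin: "finite {\<eta>. \<eta> < om2}"
  let ?R = "ord_rel {\<eta>. \<eta> < om2}" and ?C = "cardSuc (cardSuc natLeq)"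
  have "finite (Field ?R)"
    using fin by (rule finite_subset[rotated]) (auto simp: ord_rel_def Field_def)
  moreover have "(?C, ?R) \<in> ordLeq"
    using assms ordIso_iff_ordLeq unfolding is_omega2_def by blast
  ultimately have "finite (Field ?C)"
    using card_of_mono2 card_of_ordLeq_finite by blast
  moreover have "infinite (Field ?C)"
    using cardSuc_finite[OF cardSuc_Card_order[OF natLeq_Card_order]] cardSuc_finite[OF natLeq_Card_order]
    by (simp add: Field_natLeq)
  ultimately show False by blast
qed

lemma finite_initial_segment_not_cof_omega:
  fixes a :: "'o::wellorder"
  assumes "finite {\<eta>. \<eta> < a}"
  shows "\<not> cof_omega a"
proof
  assume "cof_omega a"
  then obtain f :: "nat \<Rightarrow> 'o" where "strict_mono f" "\<forall>n. f n < a"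
    unfolding cof_omega_def by blast
  then have "infinite (range f)" and "range f \<subseteq> {\<eta>. \<eta> < a}"
    using finite_imageD[of f UNIV] strict_mono_imp_inj_on by auto
  with assms show False using finite_subset by blast
qed

lemma two_not_cof_omega_below:
  fixes om :: "'o::wellorder"
  assumes "infinite {\<eta>. \<eta> < om}"
  obtains a0 a1 x where "a0 < a1" "a1 < x" "x < om" "\<not> cof_omega a0" "\<not> cof_omega a1"
proof -
  define a0 :: 'o where "a0 = (LEAST y. True)"
  define a1 :: 'o where "a1 = (LEAST y. a0 < y)"
  have "infinite ({\<eta>. \<eta> < om} - {a0, a1})" using assms by simp
  then obtain x where x: "x < om" "x \<noteq> a0" "x \<noteq> a1"
    by (metis (no_types, lifting) Diff_iff ex_in_conv infinite_imp_nonempty insertCI mem_Collect_eq)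
  have a0_least: "a0 \<le> y" for y unfolding a0_def by (rule Least_le) simp
  have "a0 < x" using a0_least[of x] x(2) by simp
  then have "a0 < a1" unfolding a1_def by (rule LeastI)
  have "a1 \<le> x" unfolding a1_def using \<open>a0 < x\<close> by (rule Least_le)
  then have "a1 < x" using x(3) by (metis le_neq_trans)
  have "{\<eta>. \<eta> < a0} = {}" using a0_least leD by blast
  then have "\<not> cof_omega a0" using finite_initial_segment_not_cof_omega by (metis finite.emptyI)
  have "{\<eta>. \<eta> < a1} \<subseteq> {a0}"
  proof
    fix \<eta> assume "\<eta> \<in> {\<eta>. \<eta> < a1}"
    then have "\<not> a0 < \<eta>" unfolding a1_def using not_less_Least by blast
    then show "\<eta> \<in> {a0}" using a0_least[of \<eta>] by simp
  qed
  then have "\<not> cof_omega a1"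
    using finite_subset finite_initial_segment_not_cof_omega by blast
  show thesis by (rule that) fact+
qed

section \<open>Forcing over a preorder\<close>

lemma not_forces_Imp:
  "\<not> forces X le (Imp \<phi> \<psi>) r \<longleftrightarrow> (\<exists>r'\<in>X. le r' r \<and> forces X le \<phi> r' \<and> forces X le (Neg \<psi>) r')"
  by (auto simp: Imp_def)

text \<open>Truth in the ground model, reading \<open>Mem \<xi> n\<close> as \<open>n \<xi> \<noteq> {}\<close>; it is what the trivial condition
  forces when all names are check names (\<open>names_within {one}\<close>).\<close>
primrec truth :: "('o, 'c) fm \<Rightarrow> bool" where
  "truth (Ground b) = b"
| "truth (Mem \<xi> n) = (n \<xi> \<noteq> {})"
| "truth (Neg \<phi>) = (\<not> truth \<phi>)"
| "truth (Conj \<phi> \<psi>) = (truth \<phi> \<and> truth \<psi>)"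
| "truth (All f) = (\<forall>\<xi>. truth (f \<xi>))"

primrec names_within :: "'c set \<Rightarrow> ('o, 'c) fm \<Rightarrow> bool" where
  "names_within C (Ground b) = True"
| "names_within C (Mem \<xi> n) = (\<forall>x. n x \<subseteq> C)"
| "names_within C (Neg \<phi>) = names_within C \<phi>"
| "names_within C (Conj \<phi> \<psi>) = (names_within C \<phi> \<and> names_within C \<psi>)"
| "names_within C (All f) = (\<forall>\<xi>. names_within C (f \<xi>))"

locale forcing_preorder =
  fixes le :: "'c \<Rightarrow> 'c \<Rightarrow> bool" and one :: 'c
  assumes le_refl [simp]: "le x x"
    and le_trans: "le x y \<Longrightarrow> le y z \<Longrightarrow> le x z"
    and le_one [simp]: "le x one"
begin

lemma forces_mono: "forces X le \<phi> p \<Longrightarrow> le q p \<Longrightarrow> forces X le \<phi> q"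
proof (induction \<phi> arbitrary: p q)
  case (Mem \<xi> n) then show ?case by simp (meson le_trans)
next
  case (Neg \<phi>) then show ?case by simp (meson le_trans)
next
  case (All f) then show ?case by simp (meson rangeI)
qed auto

lemma forces_ImpE:
  assumes "forces X le (Imp \<phi> \<psi>) r" "forces X le \<phi> r" "r \<in> X"
  obtains r' where "r' \<in> X" "le r' r" "forces X le \<psi> r'"
  using assms unfolding Imp_def by auto

lemma forces_Neg_Ground: "r \<in> X \<Longrightarrow> forces X le (Neg (Ground b)) r \<longleftrightarrow> \<not> b"
  by simp (meson le_refl)

lemma forces_endext_refl: "forces X le (endext A A) r"
  unfolding endext_def Imp_def by simp (meson le_refl le_trans)

lemma endext_MemE:
  assumes "t \<in> X" "forces X le (endext A B) t" "forces X le (Mem \<xi> A) t"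
  obtains t' where "t' \<in> X" "le t' t" "forces X le (Mem \<xi> B) t'"
proof -
  have "forces X le (Imp (Mem \<xi> A) (Mem \<xi> B)) t"
    using assms(2) by (simp add: endext_def)
  then show thesis using forces_ImpE assms(1,3) that by blast
qed

lemma endext_less:
  assumes "t \<in> X" "forces X le (endext A B) t"
    and "forces X le (Mem \<xi> B) t" "forces X le (Neg (Mem \<xi> A)) t" "forces X le (Mem \<zeta> A) t"
  shows "\<zeta> < \<xi>"
proof -
  have "forces X le (Imp (Conj (Mem \<xi> B) (Conj (Neg (Mem \<xi> A)) (Mem \<zeta> A))) (Ground (\<zeta> < \<xi>))) t"
    using assms(2) unfolding endext_def by simp
  then show ?thesis
    using assms by (auto elim: forces_ImpE)
qed

lemma common_endext_less:
  assumes "t \<in> X" "forces X le (endext A B) t" "forces X le (endext C B) t"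
    and "forces X le (Mem \<xi> C) t" "forces X le (Neg (Mem \<xi> A)) t" "forces X le (Mem \<zeta> A) t"
  shows "\<zeta> < \<xi>"
proof -
  obtain t' where t': "t' \<in> X" "le t' t" "forces X le (Mem \<xi> B) t'"
    using endext_MemE[OF assms(1,3,4)] .
  show ?thesis
    using endext_less[OF t'(1) _ t'(3)] assms(2,5,6) forces_mono t'(2) by blast
qed

lemma not_endextE:
  assumes "t \<in> X" "forces X le (Neg (endext A C)) t"
  obtains (not_subset) t' \<xi> where "t' \<in> X" "le t' t" "forces X le (Mem \<xi> A) t'" "forces X le (Neg (Mem \<xi> C)) t'"
  | (not_end) t' \<xi> \<zeta> where "t' \<in> X" "le t' t" "forces X le (Mem \<xi> C) t'"
      "forces X le (Neg (Mem \<xi> A)) t'" "forces X le (Mem \<zeta> A) t'" "\<not> \<zeta> < \<xi>"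
proof -
  have "\<not> forces X le (endext A C) t" using assms by auto
  then consider \<xi> where "\<not> forces X le (Imp (Mem \<xi> A) (Mem \<xi> C)) t"
    | \<xi> \<zeta> where "\<not> forces X le (Imp (Conj (Mem \<xi> C) (Conj (Neg (Mem \<xi> A)) (Mem \<zeta> A))) (Ground (\<zeta> < \<xi>))) t"
    unfolding endext_def by auto
  then show thesis
  proof cases
    case 1
    then show thesis using not_subset unfolding not_forces_Imp by blast
  next
    case (2 \<xi> \<zeta>)
    then obtain t' where "t' \<in> X" "le t' t" "\<not> \<zeta> < \<xi>"
      and "forces X le (Conj (Mem \<xi> C) (Conj (Neg (Mem \<xi> A)) (Mem \<zeta> A))) t'"
      unfolding not_forces_Imp using forces_Neg_Ground by blast
    then show thesis
      using not_end by (simp only: forces.simps(4)) blast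
  qed
qed

lemma common_endext_witness:
  assumes "t \<in> X" "forces X le (endext A B) t" "forces X le (endext C B) t"
    and "forces X le (Neg (endext A C)) t"
  obtains t' \<xi> where "t' \<in> X" "le t' t" "forces X le (Mem \<xi> A) t'" "forces X le (Neg (Mem \<xi> C)) t'"
  using assms(1,4)
proof (cases rule: not_endextE)
  case (not_subset t' \<xi>)
  then show thesis by (rule that)
next
  case (not_end t' \<xi> \<zeta>)
  have "\<zeta> < \<xi>"
    using common_endext_less[OF not_end(1) forces_mono[OF assms(2)] forces_mono[OF assms(3)]] not_end
    by blast
  with not_end(6) show thesis by contradiction
qed

lemma forces_endext_comparable:
  assumes AB: "forces X le (endext A B) c" and CB: "forces X le (endext C B) c"
  shows "forces X le (Disj (endext A C) (endext C A)) c"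
  unfolding Disj_def
proof (subst forces.simps(3), intro ballI impI notI)
  fix r assume r: "r \<in> X" "le r c"
    and "forces X le (Conj (Neg (endext A C)) (Neg (endext C A))) r"
  then have AC: "forces X le (Neg (endext A C)) r" and CA: "forces X le (Neg (endext C A)) r"
    by (simp_all only: forces.simps(4))
  obtain r1 \<xi> where r1: "r1 \<in> X" "le r1 r" "forces X le (Mem \<xi> A) r1" "forces X le (Neg (Mem \<xi> C)) r1"
    using common_endext_witness[OF r(1) forces_mono[OF AB r(2)] forces_mono[OF CB r(2)] AC] .
  have r1c: "le r1 c" using r r1 le_trans by blast
  obtain r2 \<xi>' where r2: "r2 \<in> X" "le r2 r1" "forces X le (Mem \<xi>' C) r2" "forces X le (Neg (Mem \<xi>' A)) r2"
    using common_endext_witness[OF r1(1) forces_mono[OF CB r1c] forces_mono[OF AB r1c] forces_mono[OF CA r1(2)]] .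
  have r2c: "le r2 c" using r1c r2 le_trans by blast
  have "\<xi> < \<xi>'"
    using common_endext_less[OF r2(1) forces_mono[OF AB r2c] forces_mono[OF CB r2c] r2(3,4)]
      forces_mono[OF r1(3) r2(2)] by blast
  moreover have "\<xi>' < \<xi>"
    using common_endext_less[OF r2(1) forces_mono[OF CB r2c] forces_mono[OF AB r2c]
      forces_mono[OF r1(3) r2(2)] forces_mono[OF r1(4) r2(2)] r2(3)] .
  ultimately show False by simp
qed

definition check :: "'o \<Rightarrow> 'o \<Rightarrow> 'c set" where
  "check a = (\<lambda>\<xi>. if \<xi> = a then {one} else {})"

lemma forces_iff_truth: "names_within {one} \<phi> \<Longrightarrow> t \<in> X \<Longrightarrow> forces X le \<phi> t \<longleftrightarrow> truth \<phi>"
proof (induction \<phi> arbitrary: t)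
  case (Mem \<xi> n)
  then consider "n \<xi> = {}" | "n \<xi> = {one}" by (auto simp: subset_singleton_iff)
  then show ?case
  proof cases
    case 1
    then show ?thesis using Mem.prems(2) by (auto intro!: bexI[of _ t])
  next
    case 2
    then show ?thesis by simp (use le_refl in blast)
  qed
next
  case (Neg \<phi>)
  then show ?case by simp (use le_refl in blast)
qed auto

lemma forces_Mem_check: "t \<in> X \<Longrightarrow> forces X le (Mem \<xi> (check a)) t \<longleftrightarrow> \<xi> = a"
  using forces_iff_truth[of "Mem \<xi> (check a)" t X] by (auto simp: check_def)

lemma forces_Neg_Mem_check: "t \<in> X \<Longrightarrow> forces X le (Neg (Mem \<xi> (check a))) t \<longleftrightarrow> \<xi> \<noteq> a"
  using forces_iff_truth[of "Neg (Mem \<xi> (check a))" t X] by (auto simp: check_def)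

lemma endext_check_less:
  assumes "t \<in> X" "forces X le (endext A B) t" "forces X le (endext (check a) B) t"
    and "forces X le (Mem y A) t" "y \<noteq> a"
  shows "a < y"
proof -
  have "forces X le (Neg (Mem y (check a))) t"
    using forces_Neg_Mem_check[OF assms(1)] assms(5) by (rule iffD2)
  moreover have "forces X le (Mem a (check a)) t"
    using forces_Mem_check[OF assms(1)] by (rule iffD2) (rule refl)
  ultimately show ?thesis by (rule common_endext_less[OF assms(1,3,2,4)])
qed

lemma endext_check_Mem:
  assumes t: "t \<in> X" and AB: "forces X le (endext A B) t" and aB: "forces X le (endext (check a) B) t"
    and y: "forces X le (Mem y A) t"
  obtains t' where "t' \<in> X" "le t' t" "forces X le (Mem a A) t'"
proof -
  have "\<exists>t'\<in>X. le t' t \<and> forces X le (Mem a A) t'"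
  proof (rule ccontr)
    assume "\<not> ?thesis"
    then have a: "forces X le (Neg (Mem a A)) t" by (simp only: forces.simps(3)) blast
    have "y \<noteq> a"
    proof
      assume "y = a"
      with y a t show False by (simp only: forces.simps(3)) (metis le_refl)
    qed
    then have "a < y" by (rule endext_check_less[OF t AB aB y])
    moreover have "forces X le (Mem a (check a)) t"
      using forces_Mem_check[OF t] by (rule iffD2) (rule refl)
    then have "y < a" by (rule common_endext_less[OF t AB aB _ a y])
    ultimately show False by simp
  qed
  then show thesis using that by blast
qed

text \<open>If \<open>B\<close> end-extends both \<open>A\<close> and \<open>{a}\<close>, then \<open>a\<close> is the least element of \<open>A\<close>;
  so a nonempty \<open>A\<close> determines \<open>a\<close>.\<close>
lemma endext_check_unique:
  assumes c: "c \<in> X" and ne: "forces X le (Ex (\<lambda>\<xi>. Mem \<xi> A)) c"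
    and AB0: "forces X le (endext A B0) c" and aB0: "forces X le (endext (check a0) B0) c"
    and AB1: "forces X le (endext A B1) c" and aB1: "forces X le (endext (check a1) B1) c"
  shows "a0 = a1"
proof (rule ccontr)
  assume ne01: "a0 \<noteq> a1"
  obtain t x where t: "t \<in> X" "le t c" "forces X le (Mem x A) t"
    using ne c unfolding Ex_def by auto
  obtain t1 where t1: "t1 \<in> X" "le t1 t" "forces X le (Mem a0 A) t1"
    using endext_check_Mem[OF t(1) forces_mono[OF AB0 t(2)] forces_mono[OF aB0 t(2)] t(3)] .
  have t1c: "le t1 c" using t t1 le_trans by blast
  obtain t2 where t2: "t2 \<in> X" "le t2 t1" "forces X le (Mem a1 A) t2"
    using endext_check_Mem[OF t1(1) forces_mono[OF AB1 t1c] forces_mono[OF aB1 t1c] t1(3)] .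
  have t2c: "le t2 c" using t1c t2 le_trans by blast
  have "a1 < a0"
    using endext_check_less[OF t2(1) forces_mono[OF AB1 t2c] forces_mono[OF aB1 t2c]
      forces_mono[OF t1(3) t2(2)]] ne01 by blast
  moreover have "a0 < a1"
    using endext_check_less[OF t2(1) forces_mono[OF AB0 t2c] forces_mono[OF aB0 t2c] t2(3)] ne01 by blast
  ultimately show False by simp
qed

lemma forces_cbs_check:
  fixes a :: "'o::wellorder"
  assumes "t \<in> X" "a < x" "x < om2"
  shows "forces X le (cbs om2 (check a)) t"
proof -
  have no_limit: "\<not> (is_limit \<delta> \<and> (\<forall>\<zeta><\<delta>. a < \<delta> \<and> \<zeta> \<le> a))" for \<delta>
  proof
    assume h: "is_limit \<delta> \<and> (\<forall>\<zeta><\<delta>. a < \<delta> \<and> \<zeta> \<le> a)"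
    then have "a < \<delta>" unfolding is_limit_def by blast
    then obtain y where "a < y" "y < \<delta>" using h unfolding is_limit_def lim0_def by blast
    then show False using h by (meson not_le)
  qed
  have "truth (cbs om2 (check a))"
    using assms(2,3) no_limit by (simp add: cbs_def Imp_def Ex_def check_def) (meson order.strict_trans le_less)
  moreover have "names_within {one} (cbs om2 (check a))"
    by (simp add: cbs_def Imp_def Ex_def check_def)
  ultimately show ?thesis using forces_iff_truth assms(1) by blast
qed

end

section \<open>The orders of the iteration\<close>

interpretation lec: forcing_preorder lec Map.empty
proof
  fix x y z :: "'o cc"
  show "lec x x" and "lec x Map.empty" by (auto simp: lec_def)
  show "lec x y \<Longrightarrow> lec y z \<Longrightarrow> lec x z"
    unfolding lec_def dom_def map_le_def by force
qed

lemma leq_refl: "leq P q q"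
  unfolding leq_def by (auto simp: lec.forces_endext_refl)

lemma leq_map_le:
  assumes "x \<subseteq>\<^sub>m y" "leq P t y"
  shows "leq P t x"
proof -
  have "dom x \<subseteq> dom y" using assms(1) by (rule map_le_implies_dom_le)
  moreover have "coh x \<gamma> = coh y \<gamma>" "nm x \<gamma> = nm y \<gamma>" if "\<gamma> \<in> dom x" for \<gamma>
    using assms(1) that by (auto simp: map_le_def coh_def nm_def)
  ultimately show ?thesis
    using assms(2) unfolding leq_def by (metis subsetD subset_trans)
qed

lemma leq_upd_fresh: "\<gamma> \<notin> dom q \<Longrightarrow> leq P (q(\<gamma> \<mapsto> v)) q"
  unfolding leq_def by (auto simp: coh_def nm_def lec.forces_endext_refl)

lemma forces_disjoint_fm_mono:
  "forces X le (disjoint_fm a b) x \<Longrightarrow> (\<And>t. t \<in> X \<Longrightarrow> le t y \<Longrightarrow> le t x) \<Longrightarrow> forces X le (disjoint_fm a b) y"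
  unfolding disjoint_fm_def by auto

lemma evres_apply: "even_ord \<gamma> \<Longrightarrow> evres p \<gamma> = p \<gamma>"
  by (simp add: evres_def)

lemma evres_upd_odd: "odd_ord \<gamma> \<Longrightarrow> evres (q(\<gamma> \<mapsto> v)) = evres q"
  unfolding evres_def odd_ord_def by (rule ext) (auto simp: restrict_map_def)

lemma cres_evres: "evres a = evres b \<Longrightarrow> cres a \<gamma> = cres b \<gamma>"
  unfolding cres_def by (rule ext) (metis evres_apply)

lemma leqstar_s_evres: "leqstar_s P \<beta> q p \<Longrightarrow> evres p = evres q"
  unfolding leqstar_s_def compat_star_def leqstar_def leqb_def by (metis leq_refl)

lemma evres_restrict: "evres p |` A = evres (p |` A)"
  by (simp add: evres_def Int_commute)

lemma leq_odd_endext: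
  "leq P s p \<Longrightarrow> \<gamma> \<in> dom p \<Longrightarrow> odd_ord \<gamma> \<Longrightarrow> forces (Pc P \<gamma>) lec (endext (nm p \<gamma>) (nm s \<gamma>)) (cres s \<gamma>)"
  unfolding leq_def by blast

lemma leqstar_upd_odd:
  "q \<in> P \<beta> \<Longrightarrow> q(\<gamma> \<mapsto> v) \<in> P \<beta> \<Longrightarrow> \<gamma> \<notin> dom q \<Longrightarrow> odd_ord \<gamma> \<Longrightarrow> leqstar P \<beta> (q(\<gamma> \<mapsto> v)) q"
  by (simp add: leqstar_def leqb_def leq_upd_fresh evres_upd_odd)

lemma leqstar_s_endext_comparable:
  assumes "leqstar_s P \<beta> q p" "\<gamma> \<in> dom p" "\<gamma> \<in> dom q" "odd_ord \<gamma>"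
  shows "forces (Pc P \<gamma>) lec (Disj (endext (nm p \<gamma>) (nm q \<gamma>)) (endext (nm q \<gamma>) (nm p \<gamma>))) (cres p \<gamma>)"
proof -
  have "leqstar P \<beta> q q" using assms(1) by (simp add: leqstar_s_def leqstar_def leqb_def leq_refl)
  then obtain s where "leqstar P \<beta> s q" "leqstar P \<beta> s p"
    using assms(1) unfolding leqstar_s_def compat_star_def by blast
  then have "leq P s q" "leq P s p" "evres s = evres p"
    unfolding leqstar_def leqb_def by auto
  then show ?thesis
    using leq_odd_endext[of P s] assms(2-4) lec.forces_endext_comparable cres_evres by metis
qed

section \<open>Suitable iterations\<close>

locale suitable_iteration =
  fixes om2 \<alpha> :: "'o::wellorder" and P :: "'o \<Rightarrow> 'o cond set" and S :: "'o \<Rightarrow> 'o \<Rightarrow> 'o cond set"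
  assumes suitable: "suitable om2 \<alpha> P S"
    and infinite_om2: "infinite {\<eta>. \<eta> < om2}"
begin

text \<open>Clauses (2) and (3) of the definition: \<open>v\<close> is an allowed value at coordinate \<open>\<delta>\<close> of a condition
  whose restriction to \<open>\<delta>\<close> is \<open>r\<close> (\<open>None\<close> meaning \<open>\<delta>\<close> is not in the domain).\<close>
definition admissible :: "'o \<Rightarrow> 'o val option \<Rightarrow> 'o cond \<Rightarrow> bool" where
  "admissible \<delta> v r \<longleftrightarrow> (case v of
      None \<Rightarrow> True
    | Some (Cohen c) \<Rightarrow> even_ord \<delta> \<and> finite (dom c)
    | Some (Club n) \<Rightarrow> odd_ord \<delta> \<and> nice_name (Pc P \<delta>) lec {\<xi>. \<xi> < om2} n
        \<and> forces (Pc P \<delta>) lec (cbs om2 n) Map.empty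
        \<and> forces (P \<delta>) (leq P) (disjoint_fm (embname n) (S \<delta>)) r)"

lemmas suitable_clauses = suitable[unfolded suitable_def, THEN conjunct2]

lemma S_nice_name: "\<gamma> < \<alpha> \<Longrightarrow> odd_ord \<gamma> \<Longrightarrow> nice_name (P \<gamma>) (leq P) {\<xi>. \<xi> < om2 \<and> cof_omega \<xi>} (S \<gamma>)"
  using suitable[unfolded suitable_def, THEN conjunct1] by blast

lemma P_dom: "\<beta> \<le> \<alpha> \<Longrightarrow> p \<in> P \<beta> \<Longrightarrow> dom p \<subseteq> {\<gamma>. \<gamma> < \<beta>}"
  using suitable_clauses[THEN conjunct1] by blast

lemma P_zero: "\<forall>x. z \<le> x \<Longrightarrow> P z = {Map.empty}"
  using suitable_clauses[THEN conjunct2, THEN conjunct1] by blast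

lemma P_succ_iff:
  assumes "succ_of \<delta> \<beta>" "\<delta> < \<alpha>"
  shows "p \<in> P \<beta> \<longleftrightarrow> dom p \<subseteq> {x. x \<le> \<delta>} \<and> p |` {x. x < \<delta>} \<in> P \<delta>
                         \<and> admissible \<delta> (p \<delta>) (p |` {x. x < \<delta>})"
proof -
  have even: "even_ord \<delta> \<Longrightarrow> p \<in> P \<beta> \<longleftrightarrow> dom p \<subseteq> {x. x \<le> \<delta>} \<and> p |` {x. x < \<delta>} \<in> P \<delta>
             \<and> (\<delta> \<in> dom p \<longrightarrow> (\<exists>c. p \<delta> = Some (Cohen c) \<and> finite (dom c)))"
    and odd: "odd_ord \<delta> \<Longrightarrow> p \<in> P \<beta> \<longleftrightarrow> dom p \<subseteq> {x. x \<le> \<delta>} \<and> p |` {x. x < \<delta>} \<in> P \<delta>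
             \<and> (\<delta> \<in> dom p \<longrightarrow> (\<exists>n. p \<delta> = Some (Club n)
                    \<and> nice_name (Pc P \<delta>) lec {\<xi>. \<xi> < om2} n
                    \<and> forces (Pc P \<delta>) lec (cbs om2 n) Map.empty
                    \<and> forces (P \<delta>) (leq P) (disjoint_fm (embname n) (S \<delta>)) (p |` {x. x < \<delta>})))"
    using suitable_clauses[THEN conjunct2, THEN conjunct2, THEN conjunct1]
      suitable_clauses[THEN conjunct2, THEN conjunct2, THEN conjunct2, THEN conjunct1] assms
    by blast+
  show ?thesis
  proof (cases "even_ord \<delta>")
    case True
    then show ?thesis
      unfolding even[OF True] admissible_def odd_ord_def
      by (cases "p \<delta>") (auto split: val.splits)
  next
    case False
    then show ?thesis
      unfolding odd[OF False[folded odd_ord_def]] admissible_def odd_ord_def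
      by (cases "p \<delta>") (auto split: val.splits)
  qed
qed

lemma P_limit_iff:
  "\<delta> \<le> \<alpha> \<Longrightarrow> is_limit \<delta> \<Longrightarrow>
   p \<in> P \<delta> \<longleftrightarrow> dom p \<subseteq> {x. x < \<delta>}
             \<and> finite (dom p \<inter> {x. even_ord x})
             \<and> (card_of (dom p \<inter> {x. odd_ord x}), card_of {\<eta>. \<eta> < om2}) \<in> ordLess
             \<and> (\<forall>\<beta>. \<beta> < \<delta> \<longrightarrow> p |` {x. x < \<beta>} \<in> P \<beta>)"
  using suitable_clauses[THEN conjunct2, THEN conjunct2, THEN conjunct2, THEN conjunct2] by blast

lemma P_restrict: "\<beta> \<le> \<alpha> \<Longrightarrow> p \<in> P \<beta> \<Longrightarrow> z \<le> \<beta> \<Longrightarrow> p |` {x. x < z} \<in> P z"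
proof (induction \<beta> arbitrary: p z rule: less_induct)
  case (less \<beta>)
  show ?case
  proof (cases "z = \<beta>")
    case True
    then show ?thesis using less.prems restrict_map_superset_dom[OF P_dom] by simp
  next
    case False
    then have "z < \<beta>" using less.prems(3) by simp
    then show ?thesis
    proof (cases \<beta> rule: ordinal_cases)
      case zero
      then show ?thesis using \<open>z < \<beta>\<close> by (simp add: not_less[symmetric])
    next
      case (succ \<delta>)
      have "\<delta> < \<beta>" "z \<le> \<delta>" using succ_of_less[OF succ] succ_of_le[OF succ \<open>z < \<beta>\<close>] .
      moreover have "p |` {x. x < \<delta>} \<in> P \<delta>"
        using P_succ_iff[OF succ] less.prems(1,2) \<open>\<delta> < \<beta>\<close> by simp
      ultimately show ?thesis using less.IH[of \<delta> "p |` {x. x < \<delta>}" z] less.prems(1) by simp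
    next
      case limit
      then show ?thesis using P_limit_iff[OF less.prems(1) limit] less.prems(2) \<open>z < \<beta>\<close> by blast
    qed
  qed
qed

lemma P_admissible:
  assumes "\<beta> \<le> \<alpha>" "p \<in> P \<beta>" "\<delta> \<in> dom p"
  shows "admissible \<delta> (p \<delta>) (p |` {x. x < \<delta>})"
proof -
  have "\<delta> < \<beta>" using P_dom[OF assms(1,2)] assms(3) by blast
  then obtain \<beta>' where \<beta>': "succ_of \<delta> \<beta>'" "\<beta>' \<le> \<beta>" by (rule succ_of_exists)
  then have "p |` {x. x < \<beta>'} \<in> P \<beta>'" using P_restrict[OF assms(1,2)] by blast
  moreover have "\<delta> < \<alpha>" using \<open>\<delta> < \<beta>\<close> assms(1) by simp
  ultimately have "admissible \<delta> ((p |` {x. x < \<beta>'}) \<delta>) (p |` {x. x < \<beta>'} |` {x. x < \<delta>})"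
    using P_succ_iff[OF \<beta>'(1)] by blast
  then show ?thesis using succ_of_less[OF \<beta>'(1)] by simp
qed

lemma empty_in_P: "\<beta> \<le> \<alpha> \<Longrightarrow> Map.empty \<in> P \<beta>"
proof (induction \<beta> rule: less_induct)
  case (less \<beta>)
  show ?case
  proof (cases \<beta> rule: ordinal_cases)
    case zero
    then show ?thesis using P_zero by simp
  next
    case (succ \<delta>)
    then show ?thesis
      using P_succ_iff[OF succ] less succ_of_less[OF succ] by (simp add: admissible_def)
  next
    case limit
    then show ?thesis
      using P_limit_iff[OF less.prems limit] less finite_ordLess_infinite_card_of infinite_om2 by auto
  qed
qed

lemma admissible_mono: "q \<subseteq>\<^sub>m r \<Longrightarrow> admissible \<delta> v q \<Longrightarrow> admissible \<delta> v r"
  unfolding admissible_def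
  by (auto split: option.splits val.splits intro: forces_disjoint_fm_mono leq_map_le)

lemma P_upd_succ:
  assumes "succ_of \<delta> \<beta>" "\<delta> < \<alpha>" "q |` {x. x < \<beta>} \<in> P \<beta>" "\<gamma> \<le> \<delta>" "\<gamma> \<notin> dom q"
    and "q |` {x. x < \<gamma>} \<in> P \<gamma>" "admissible \<gamma> (Some v) (q |` {x. x < \<gamma>})"
    and "\<gamma> < \<delta> \<Longrightarrow> q(\<gamma> \<mapsto> v) |` {x. x < \<delta>} \<in> P \<delta>"
  shows "q(\<gamma> \<mapsto> v) |` {x. x < \<beta>} \<in> P \<beta>"
proof -
  let ?r = "q(\<gamma> \<mapsto> v)"
  have "\<delta> < \<beta>" using succ_of_less[OF assms(1)] .
  have r_\<delta>: "?r |` {x. x < \<delta>} \<in> P \<delta> \<and> admissible \<delta> (?r \<delta>) (?r |` {x. x < \<delta>})"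
  proof (cases "\<delta> = \<gamma>")
    case True
    have "?r |` {x. x < \<gamma>} = q |` {x. x < \<gamma>}" by simp
    then show ?thesis using True assms(6,7) by simp
  next
    case False
    have "admissible \<delta> (q \<delta>) (q |` {x. x < \<delta>})"
      using P_succ_iff[OF assms(1,2)] assms(3) \<open>\<delta> < \<beta>\<close> by simp
    moreover have "q |` {x. x < \<delta>} \<subseteq>\<^sub>m ?r |` {x. x < \<delta>}"
      using assms(5) by (auto simp: map_le_def restrict_map_def)
    ultimately have "admissible \<delta> (?r \<delta>) (?r |` {x. x < \<delta>})"
      using admissible_mono False by simp
    moreover have "?r |` {x. x < \<delta>} \<in> P \<delta>"
      using assms(4,8) False by simp
    ultimately show ?thesis by simp
  qed
  have restr: "(?r |` {x. x < \<beta>}) |` {x. x < \<delta>} = ?r |` {x. x < \<delta>}"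
    using less_imp_le[OF \<open>\<delta> < \<beta>\<close>] by (simp only: restrict_restrict Int_initial_segments)
  have at_\<delta>: "(?r |` {x. x < \<beta>}) \<delta> = ?r \<delta>" using \<open>\<delta> < \<beta>\<close> by (intro restrict_in) simp
  have "dom (?r |` {x. x < \<beta>}) \<subseteq> {x. x \<le> \<delta>}" using succ_of_le[OF assms(1)] by auto
  then show ?thesis
    unfolding P_succ_iff[OF assms(1,2)] restr at_\<delta> by (rule conjI[OF _ r_\<delta>])
qed

lemma P_upd_limit:
  assumes "\<beta> \<le> \<alpha>" "is_limit \<beta>" "q |` {x. x < \<beta>} \<in> P \<beta>"
    and "\<And>\<beta>'. \<beta>' < \<beta> \<Longrightarrow> q(\<gamma> \<mapsto> v) |` {x. x < \<beta>'} \<in> P \<beta>'"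
  shows "q(\<gamma> \<mapsto> v) |` {x. x < \<beta>} \<in> P \<beta>"
proof -
  let ?r = "q(\<gamma> \<mapsto> v)" and ?D = "dom (q |` {x. x < \<beta>})"
  have q_lim: "finite (?D \<inter> {x. even_ord x}) \<and>
      (card_of (?D \<inter> {x. odd_ord x}), card_of {\<eta>. \<eta> < om2}) \<in> ordLess"
    using assms(3)[unfolded P_limit_iff[OF assms(1,2)]] by (elim conjE) (rule conjI)
  have "dom (?r |` {x. x < \<beta>}) \<subseteq> insert \<gamma> ?D"
    by (auto simp only: dom_restrict dom_fun_upd option.simps if_False)
  then have sub: "dom (?r |` {x. x < \<beta>}) \<inter> A \<subseteq> insert \<gamma> (?D \<inter> A)" for A
    by blast
  have "finite (dom (?r |` {x. x < \<beta>}) \<inter> {x. even_ord x})"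
    using finite_subset[OF sub] q_lim by blast
  moreover have "(card_of (dom (?r |` {x. x < \<beta>}) \<inter> {x. odd_ord x}), card_of {\<eta>. \<eta> < om2}) \<in> ordLess"
    using insert_ordLess_infinite_card_of[OF infinite_om2 q_lim[THEN conjunct2]]
    by (rule ordLeq_ordLess_trans[OF card_of_mono1[OF sub]])
  moreover have "?r |` {x. x < \<beta>} |` {x. x < \<beta>'} \<in> P \<beta>'" if "\<beta>' < \<beta>" for \<beta>'
    using assms(4)[OF that] that by (simp only: restrict_restrict Int_initial_segments less_imp_le)
  moreover have "dom (?r |` {x. x < \<beta>}) \<subseteq> {x. x < \<beta>}" by (simp only: dom_restrict) blast
  ultimately show ?thesis
    unfolding P_limit_iff[OF assms(1,2)] by blast
qed

lemma P_upd:
  assumes "\<beta> \<le> \<alpha>" "q \<in> P \<beta>" "\<gamma> < \<beta>" "\<gamma> \<notin> dom q"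
    and "admissible \<gamma> (Some v) (q |` {x. x < \<gamma>})"
  shows "q(\<gamma> \<mapsto> v) \<in> P \<beta>"
proof -
  let ?r = "q(\<gamma> \<mapsto> v)"
  have q_\<gamma>: "q |` {x. x < \<gamma>} \<in> P \<gamma>" using P_restrict[OF assms(1,2)] assms(3) by simp
  have "?r |` {x. x < \<beta>'} \<in> P \<beta>'" if "\<beta>' \<le> \<beta>" "\<gamma> < \<beta>'" for \<beta>'
    using that
  proof (induction \<beta>' rule: less_induct)
    case (less \<beta>')
    have "\<beta>' \<le> \<alpha>" using less.prems assms(1) by simp
    have q': "q |` {x. x < \<beta>'} \<in> P \<beta>'" using P_restrict[OF assms(1,2) less.prems(1)] .
    show ?case
    proof (cases \<beta>' rule: ordinal_cases)
      case zero
      then show ?thesis using less.prems(2) leD by blast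
    next
      case (succ \<delta>)
      have "\<delta> < \<beta>'" "\<gamma> \<le> \<delta>" using succ_of_less[OF succ] succ_of_le[OF succ less.prems(2)] .
      have "\<delta> < \<alpha>" using \<open>\<delta> < \<beta>'\<close> \<open>\<beta>' \<le> \<alpha>\<close> by simp
      moreover have "\<gamma> < \<delta> \<Longrightarrow> ?r |` {x. x < \<delta>} \<in> P \<delta>"
        using \<open>\<delta> < \<beta>'\<close> less.prems(1) by (intro less.IH) auto
      ultimately show ?thesis by (rule P_upd_succ[OF succ _ q' \<open>\<gamma> \<le> \<delta>\<close> assms(4) q_\<gamma> assms(5)])
    next
      case limit
      have "?r |` {x. x < \<beta>''} \<in> P \<beta>''" if "\<beta>'' < \<beta>'" for \<beta>''
      proof (cases "\<gamma> < \<beta>''")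
        case True
        then show ?thesis using that less.prems(1) by (intro less.IH) auto
      next
        case False
        then have "?r |` {x. x < \<beta>''} = q |` {x. x < \<beta>''}" by simp
        then show ?thesis using P_restrict[OF assms(1,2)] that less.prems(1) by simp
      qed
      then show ?thesis using P_upd_limit[OF \<open>\<beta>' \<le> \<alpha>\<close> limit q'] by blast
    qed
  qed
  from this[of \<beta>] have "?r |` {x. x < \<beta>} \<in> P \<beta>" using assms(3) by simp
  moreover have "?r |` {x. x < \<beta>} = ?r"
    using P_dom[OF assms(1,2)] assms(3) by (intro restrict_map_superset_dom) auto
  ultimately show ?thesis by (rule back_subst)
qed

lemma evres_in_P: "\<beta> \<le> \<alpha> \<Longrightarrow> p \<in> P \<beta> \<Longrightarrow> evres p \<in> P \<beta>"
proof (induction \<beta> arbitrary: p rule: less_induct)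
  case (less \<beta>)
  have dom_evres: "dom (evres p) = dom p \<inter> {x. even_ord x}" by (simp add: evres_def)
  show ?case
  proof (cases \<beta> rule: ordinal_cases)
    case zero
    then show ?thesis using less.prems P_zero by (simp add: evres_def)
  next
    case (succ \<delta>)
    have "\<delta> < \<beta>" "\<delta> < \<alpha>" using succ_of_less[OF succ] less.prems(1) by auto
    have p: "dom p \<subseteq> {x. x \<le> \<delta>}" "p |` {x. x < \<delta>} \<in> P \<delta>" "admissible \<delta> (p \<delta>) (p |` {x. x < \<delta>})"
      using P_succ_iff[OF succ \<open>\<delta> < \<alpha>\<close>] less.prems(2) by blast+
    have "evres p |` {x. x < \<delta>} \<in> P \<delta>"
      using less.IH[OF \<open>\<delta> < \<beta>\<close> _ p(2)] \<open>\<delta> < \<alpha>\<close> by (simp add: evres_restrict)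
    moreover have "admissible \<delta> (evres p \<delta>) (evres p |` {x. x < \<delta>})"
    proof (cases "even_ord \<delta>")
      case True
      then show ?thesis
        using p(3) by (auto simp: admissible_def evres_apply odd_ord_def split: option.splits val.splits)
    qed (simp add: admissible_def evres_def)
    moreover have "dom (evres p) \<subseteq> {x. x \<le> \<delta>}" using p(1) dom_evres by blast
    ultimately show ?thesis using P_succ_iff[OF succ \<open>\<delta> < \<alpha>\<close>] by blast
  next
    case limit
    have p: "dom p \<subseteq> {x. x < \<beta>}" "finite (dom p \<inter> {x. even_ord x})"
      "\<And>\<beta>'. \<beta>' < \<beta> \<Longrightarrow> p |` {x. x < \<beta>'} \<in> P \<beta>'"
      using P_limit_iff[OF less.prems(1) limit] less.prems(2) by blast+
    have "dom (evres p) \<inter> {x. odd_ord x} = {}" using dom_evres unfolding odd_ord_def by blast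
    moreover have "evres p |` {x. x < \<beta>'} \<in> P \<beta>'" if "\<beta>' < \<beta>" for \<beta>'
      using less.IH[OF that _ p(3)[OF that]] that less.prems(1) by (simp add: evres_restrict)
    ultimately show ?thesis
      using P_limit_iff[OF less.prems(1) limit] p(1,2) dom_evres
        finite_ordLess_infinite_card_of[OF _ infinite_om2] by (simp add: Int_assoc) blast
  qed
qed

lemma P_even_Cohen:
  assumes "\<beta> \<le> \<alpha>" "p \<in> P \<beta>" "p \<delta> = Some v" "even_ord \<delta>"
  obtains c where "v = Cohen c"
proof -
  have "admissible \<delta> (Some v) (p |` {x. x < \<delta>})"
    using P_admissible[OF assms(1,2)] assms(3) by (metis domI)
  then show thesis using assms(4) that by (cases v) (auto simp: admissible_def odd_ord_def)
qed

lemma P_odd_cbs: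
  assumes "\<beta> \<le> \<alpha>" "p \<in> P \<beta>" "\<gamma> \<in> dom p" "odd_ord \<gamma>"
  shows "forces (Pc P \<gamma>) lec (cbs om2 (nm p \<gamma>)) Map.empty"
  using P_admissible[OF assms(1-3)] assms(3,4)
  by (auto simp: admissible_def nm_def odd_ord_def split: val.splits)

lemma cres_in_Pc:
  assumes "\<beta> \<le> \<alpha>" "p \<in> P \<beta>" "\<gamma> \<le> \<beta>"
  shows "cres p \<gamma> \<in> Pc P \<gamma>"
proof -
  have "emb (cres p \<gamma>) \<delta> = (evres p |` {x. x < \<gamma>}) \<delta>" for \<delta>
  proof (cases "p \<delta>")
    case (Some v)
    show ?thesis
    proof (cases "\<delta> < \<gamma> \<and> even_ord \<delta>")
      case True
      then obtain c where "v = Cohen c" using P_even_Cohen[OF assms(1,2) Some] by blast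
      then show ?thesis using True Some by (simp add: emb_def cres_def evres_def)
    qed (auto simp: emb_def cres_def evres_def)
  qed (simp add: emb_def cres_def evres_def restrict_map_def)
  then have "emb (cres p \<gamma>) \<in> P \<gamma>"
    using P_restrict[OF assms(1) evres_in_P[OF assms(1,2)] assms(3)] by (metis ext)
  moreover have "dom (cres p \<gamma>) \<subseteq> {\<delta>. even_ord \<delta>}" by (auto simp: cres_def split: if_splits)
  ultimately show ?thesis unfolding Pc_def by simp
qed

lemma empty_in_Pc: "\<gamma> \<le> \<alpha> \<Longrightarrow> Map.empty \<in> Pc P \<gamma>"
  using empty_in_P[of \<gamma>] by (simp add: Pc_def emb_def)

lemma forces_disjoint_check:
  assumes "\<gamma> < \<alpha>" "odd_ord \<gamma>" "\<not> cof_omega a"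
  shows "forces (P \<gamma>) (leq P) (disjoint_fm (embname (lec.check a)) (S \<gamma>)) t"
  unfolding disjoint_fm_def forces.simps(5) forces.simps(3)
proof (intro allI ballI impI notI)
  fix \<xi> r assume r: "r \<in> P \<gamma>"
    and "forces (P \<gamma>) (leq P) (Conj (Mem \<xi> (embname (lec.check a))) (Mem \<xi> (S \<gamma>))) r"
  then have "embname (lec.check a) \<xi> \<noteq> {}" "S \<gamma> \<xi> \<noteq> {}"
    using leq_refl by (simp_all only: forces.simps(4) forces.simps(2)) blast+
  then have "\<xi> = a" "cof_omega \<xi>"
    using S_nice_name[OF assms(1,2)] unfolding nice_name_def
    by (auto simp: embname_def lec.check_def split: if_splits)
  then show False using assms(3) by simp
qed

lemma check_admissible:
  assumes "\<gamma> < \<alpha>" "odd_ord \<gamma>" "a < x" "x < om2" "\<not> cof_omega a"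
  shows "admissible \<gamma> (Some (Club (lec.check a))) r"
proof -
  have "Map.empty \<in> Pc P \<gamma>" using empty_in_Pc assms(1) by simp
  then have "nice_name (Pc P \<gamma>) lec {\<xi>. \<xi> < om2} (lec.check a)"
    using assms(3,4) by (auto simp: nice_name_def antichain_def lec.check_def)
  then show ?thesis
    using assms forces_disjoint_check lec.forces_cbs_check[OF \<open>Map.empty \<in> Pc P \<gamma>\<close>]
    by (simp add: admissible_def)
qed

lemma leqstar_s_endext_check:
  assumes "\<beta> \<le> \<alpha>" "leqstar_s P \<beta> q p" "\<gamma> \<in> dom p" "\<gamma> \<notin> dom q" "odd_ord \<gamma>"
    and "a < x" "x < om2" "\<not> cof_omega a"
  obtains s where "forces (Pc P \<gamma>) lec (endext (lec.check a) (nm s \<gamma>)) (cres p \<gamma>)"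
    and "forces (Pc P \<gamma>) lec (endext (nm p \<gamma>) (nm s \<gamma>)) (cres p \<gamma>)"
proof -
  let ?r = "q(\<gamma> \<mapsto> Club (lec.check a))"
  have "p \<in> P \<beta>" "q \<in> P \<beta>" using assms(2) by (simp_all add: leqstar_s_def)
  then have "\<gamma> < \<beta>" using P_dom[OF assms(1)] assms(3) by blast
  then have "?r \<in> P \<beta>"
    using P_upd[OF assms(1) \<open>q \<in> P \<beta>\<close> _ assms(4) check_admissible] assms(1,5-8) by simp
  then have "leqstar P \<beta> ?r q" using leqstar_upd_odd \<open>q \<in> P \<beta>\<close> assms(4,5) by blast
  then obtain s where "leqstar P \<beta> s ?r" "leqstar P \<beta> s p"
    using assms(2) unfolding leqstar_s_def compat_star_def by blast
  then have "leq P s ?r" "leq P s p" "cres s \<gamma> = cres p \<gamma>"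
    unfolding leqstar_def leqb_def using cres_evres[of s p] by auto
  then show thesis
    using that leq_odd_endext[of P s ?r \<gamma>] leq_odd_endext[of P s p \<gamma>] assms(3,5) by (simp add: nm_def)
qed

lemma leqstar_s_dom:
  assumes "\<beta> \<le> \<alpha>" "leqstar_s P \<beta> q p"
  shows "dom p \<subseteq> dom q"
proof
  fix \<gamma> assume "\<gamma> \<in> dom p"
  show "\<gamma> \<in> dom q"
  proof (rule ccontr)
    assume "\<gamma> \<notin> dom q"
    have "p \<in> P \<beta>" using assms(2) by (simp add: leqstar_s_def)
    have "odd_ord \<gamma>"
      using leqstar_s_evres[OF assms(2)] evres_apply \<open>\<gamma> \<in> dom p\<close> \<open>\<gamma> \<notin> dom q\<close>
      unfolding odd_ord_def by (metis domIff)
    obtain a0 a1 x where a: "a0 < a1" "a1 < x" "x < om2" "\<not> cof_omega a0" "\<not> cof_omega a1"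
      using two_not_cof_omega_below[OF infinite_om2] .
    have "a0 < x" using a(1,2) by simp
    obtain s0 where s0: "forces (Pc P \<gamma>) lec (endext (lec.check a0) (nm s0 \<gamma>)) (cres p \<gamma>)"
      "forces (Pc P \<gamma>) lec (endext (nm p \<gamma>) (nm s0 \<gamma>)) (cres p \<gamma>)"
      using leqstar_s_endext_check[OF assms \<open>\<gamma> \<in> dom p\<close> \<open>\<gamma> \<notin> dom q\<close> \<open>odd_ord \<gamma>\<close> \<open>a0 < x\<close> a(3,4)] .
    obtain s1 where s1: "forces (Pc P \<gamma>) lec (endext (lec.check a1) (nm s1 \<gamma>)) (cres p \<gamma>)"
      "forces (Pc P \<gamma>) lec (endext (nm p \<gamma>) (nm s1 \<gamma>)) (cres p \<gamma>)"
      using leqstar_s_endext_check[OF assms \<open>\<gamma> \<in> dom p\<close> \<open>\<gamma> \<notin> dom q\<close> \<open>odd_ord \<gamma>\<close> a(2,3,5)] .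
    have "\<gamma> < \<beta>" using P_dom[OF assms(1) \<open>p \<in> P \<beta>\<close>] \<open>\<gamma> \<in> dom p\<close> by blast
    then have "cres p \<gamma> \<in> Pc P \<gamma>" using cres_in_Pc[OF assms(1) \<open>p \<in> P \<beta>\<close>] by simp
    moreover have "forces (Pc P \<gamma>) lec (Ex (\<lambda>\<xi>. Mem \<xi> (nm p \<gamma>))) Map.empty"
      using P_odd_cbs[OF assms(1) \<open>p \<in> P \<beta>\<close> \<open>\<gamma> \<in> dom p\<close> \<open>odd_ord \<gamma>\<close>]
      unfolding cbs_def by (simp only: forces.simps(4))
    then have "forces (Pc P \<gamma>) lec (Ex (\<lambda>\<xi>. Mem \<xi> (nm p \<gamma>))) (cres p \<gamma>)"
      using lec.forces_mono lec.le_one by blast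
    ultimately have "a0 = a1" using lec.endext_check_unique s0 s1 by blast
    with \<open>a0 < a1\<close> show False by simp
  qed
qed

end

theorem lemma2p8:
  fixes om2 om3 \<alpha> \<beta> :: "'o::wellorder"
    and P :: "'o \<Rightarrow> 'o cond set"
    and S :: "'o \<Rightarrow> 'o \<Rightarrow> 'o cond set"
    and p q :: "'o cond"
  assumes "is_omega2 om2" and "is_omega3 om3"
    and "\<alpha> < om3"
    and "suitable om2 \<alpha> P S"
    and "\<beta> \<le> \<alpha>"
    and "p \<in> P \<beta>" and "q \<in> P \<beta>"
    and "leqstar_s P \<beta> q p"
  shows "evres p = evres q
         \<and> dom p \<subseteq> dom q
         \<and> (\<forall>\<gamma>\<in>dom p. odd_ord \<gamma> \<longrightarrow>
              forces (Pc P \<gamma>) lec (Disj (endext (nm p \<gamma>) (nm q \<gamma>)) (endext (nm q \<gamma>) (nm p \<gamma>)))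
                     (cres p \<gamma>))"
proof -
  interpret suitable_iteration om2 \<alpha> P S
    using assms(4) is_omega2_infinite[OF assms(1)] by unfold_locales
  have "dom p \<subseteq> dom q" by (rule leqstar_s_dom[OF assms(5,8)])
  then show ?thesis
    using leqstar_s_evres[OF assms(8)] leqstar_s_endext_comparable[OF assms(8)] by blast
qed

end
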